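(* For every BIMS channel with capacity $C$ and every $R\ge0$, the following hold (as inequalities in $[-\infty,+\infty]$): (a) Strong converse exponent: $E_{\rm sc}^{\rm bsc}(R;C)\le E_{\rm sc}(R)\le E_{\rm sc}^{\rm bec}(R;C)$. (b) Sphere-packing exponent: $E_{\rm sp}^{\rm bsc}(R;C)\le E_{\rm sp}(R)\le E_{\rm sp}^{\rm bec}(R;C)$. (c) Generalized Feinstein exponent: $E_{\rm gfb}^{\rm bsc}(R;C)\le E_{\rm gfb}(R)\le E_{\rm gfb}^{\rm bec}(R;C)$.
   Context: A BIMS (binary-input memoryless symmetric) channel is a memoryless channel with input alphabet $\{x_0,x_1\}$, finite output alphabet $\mathcal Y$ and transition probabilities $P_{Y|X}(y|x)$. It is symmetric in Gallager's sense: the columns of the $2\times|\mathcal Y|$ transition matrix (rows indexed by inputs) can be partitioned into submatrices such that, in each submatrix, every row is a permutation of every other row and every column is a permutation of every other column. Inputs are equiprobable and logarithms are base 2. The capacity $C$ is $I(X;Y)$ under equiprobable inputs. For $\rho>-1$, $$F(\rho)=\sum_{x}\tfrac12\sum_{y:\,P_{Y|X}(y|x)>0}P_{Y|X}(y|x)\left(\frac{\tfrac12\sum_{x'}P_{Y|X}(y|x')^{1/(1+\rho)}}{P_{Y|X}(y|x)^{1/(1+\rho)}}\right)^{\rho},$$ and $E_0(\rho)=-\log F(\rho)$. The exponents are $$E_{\rm sc}(R)=\sup_{-1<\rho\le0}\bigl(E_0(\rho)-\rho R\bigr),\qquad E_{\rm sp}(R)=\sup_{\rho>0}\bigl(E_0(\rho)-\rho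 R\bigr),\qquad E_{\rm gfb}(R)=\sup_{\rho\ge0}\frac{E_0(\rho)-\rho R}{1+\rho}.$$ The quantities with superscript bec (resp. bsc) are defined by the same formulas with $E_0(\rho)$ replaced by $-\log F^{\rm bec}(\rho;C)$ (resp. $-\log F^{\rm bsc}(\rho;C)$), where $$F^{\rm bec}(\rho;C)=1+(2^{-\rho}-1)C,$$ $$F^{\rm bsc}(\rho;C)=2^{-\rho}\bigl(\varepsilon^{1/(1+\rho)}+(1-\varepsilon)^{1/(1+\rho)}\bigr)^{1+\rho},\qquad \varepsilon=h^{-1}(1-C),$$ $h$ is the binary entropy function and $h^{-1}$ its inverse on $[0,\tfrac12]$. *)

theory Defs
  imports Complex_Main "HOL-Library.Extended_Real"
begin

text \<open>Binary-input channel: inputs x0, x1 are modelled by bool (False = x0, True = x1);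
  the finite output alphabet is a finite type 'y; W x y = P_{Y|X}(y|x).\<close>

definition stochastic_channel :: "(bool \<Rightarrow> 'y::finite \<Rightarrow> real) \<Rightarrow> bool" where
  "stochastic_channel W \<longleftrightarrow> (\<forall>x y. W x y \<ge> 0) \<and> (\<forall>x. (\<Sum>y\<in>UNIV. W x y) = 1)"

text \<open>Gallager symmetry: the columns (outputs) can be partitioned into blocks such that in each
  submatrix every row is a permutation of every other row and every column is a permutation
  of every other column.\<close>
definition gallager_symmetric :: "(bool \<Rightarrow> 'y::finite \<Rightarrow> real) \<Rightarrow> bool" where
  "gallager_symmetric W \<longleftrightarrow>
     (\<exists>P :: 'y set set.
        \<Union>P = UNIV \<and> {} \<notin> P \<and> (\<forall>A\<in>P. \<forall>B\<in>P. A \<noteq> B \<longrightarrow> A \<inter> B = {}) \<and>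
        (\<forall>B\<in>P.
           (\<forall>x x'. \<exists>\<sigma>. bij_betw \<sigma> B B \<and> (\<forall>y\<in>B. W x y = W x' (\<sigma> y))) \<and>
           (\<forall>y\<in>B. \<forall>y'\<in>B.
              (W False y = W False y' \<and> W True y = W True y') \<or>
              (W False y = W True y' \<and> W True y = W False y'))))"

definition BIMS :: "(bool \<Rightarrow> 'y::finite \<Rightarrow> real) \<Rightarrow> bool" where
  "BIMS W \<longleftrightarrow> stochastic_channel W \<and> gallager_symmetric W"

text \<open>Capacity = I(X;Y) with equiprobable inputs, base-2 logarithm, 0 log 0 = 0.\<close>
definition capacity :: "(bool \<Rightarrow> 'y::finite \<Rightarrow> real) \<Rightarrow> real" where
  "capacity W = (\<Sum>x\<in>UNIV. 1/2 * (\<Sum>y | W x y > 0.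
      W x y * log 2 (W x y / (1/2 * (\<Sum>x'\<in>UNIV. W x' y)))))"

definition gallager_F :: "(bool \<Rightarrow> 'y::finite \<Rightarrow> real) \<Rightarrow> real \<Rightarrow> real" where
  "gallager_F W \<rho> = (\<Sum>x\<in>UNIV. 1/2 * (\<Sum>y | W x y > 0.
      W x y * ((1/2 * (\<Sum>x'\<in>UNIV. W x' y powr (1/(1+\<rho>)))) / (W x y powr (1/(1+\<rho>)))) powr \<rho>))"

definition gallager_E0 :: "(bool \<Rightarrow> 'y::finite \<Rightarrow> real) \<Rightarrow> real \<Rightarrow> real" where
  "gallager_E0 W \<rho> = - log 2 (gallager_F W \<rho>)"

definition E_sc :: "(real \<Rightarrow> real) \<Rightarrow> real \<Rightarrow> ereal" where
  "E_sc E0 R = (SUP \<rho>\<in>{-1<..0}. ereal (E0 \<rho> - \<rho> * R))"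

definition E_sp :: "(real \<Rightarrow> real) \<Rightarrow> real \<Rightarrow> ereal" where
  "E_sp E0 R = (SUP \<rho>\<in>{0<..}. ereal (E0 \<rho> - \<rho> * R))"

definition E_gfb :: "(real \<Rightarrow> real) \<Rightarrow> real \<Rightarrow> ereal" where
  "E_gfb E0 R = (SUP \<rho>\<in>{0..}. ereal ((E0 \<rho> - \<rho> * R) / (1 + \<rho>)))"

definition plogp :: "real \<Rightarrow> real" where
  "plogp t = (if t = 0 then 0 else t * log 2 t)"

definition bin_entropy :: "real \<Rightarrow> real" where
  "bin_entropy e = - plogp e - plogp (1 - e)"

definition bin_entropy_inv :: "real \<Rightarrow> real" where
  "bin_entropy_inv t = (THE e. e \<in> {0..1/2} \<and> bin_entropy e = t)"

definition F_bec :: "real \<Rightarrow> real \<Rightarrow> real" where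
  "F_bec C \<rho> = 1 + (2 powr (-\<rho>) - 1) * C"

definition F_bsc :: "real \<Rightarrow> real \<Rightarrow> real" where
  "F_bsc C \<rho> = (let \<epsilon> = bin_entropy_inv (1 - C) in
     2 powr (-\<rho>) * (\<epsilon> powr (1/(1+\<rho>)) + (1 - \<epsilon>) powr (1/(1+\<rho>))) powr (1+\<rho>))"

definition E0_bec :: "real \<Rightarrow> real \<Rightarrow> real" where
  "E0_bec C \<rho> = - log 2 (F_bec C \<rho>)"

definition E0_bsc :: "real \<Rightarrow> real \<Rightarrow> real" where
  "E0_bsc C \<rho> = - log 2 (F_bsc C \<rho>)"

end

theory Submission
  imports Defs "HOL-Analysis.Analysis" "HOL-Real_Asymp.Real_Asymp"
begin

(* Gallager's function E0 of a binary-input channel W, with equiprobable inputs, lies between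
   those of the binary symmetric and the binary erasure channel of the same capacity C; the
   three exponents are suprema of expressions monotone in E0, so the theorem follows.

   Group the outputs y by their weight w_y = (W(y|x0) + W(y|x1))/2 and crossover
   e_y = W(y|x0)/(2 w_y).  Column by column one finds F(rho) = sum_y w_y g_rho(e_y) and
   C = sum_y w_y (1 - h(e_y)), where g_rho(e) is F(rho) of a BSC with crossover e and h the
   binary entropy.  The heart of the proof is that phi_rho = g_rho o h^-1 is concave on [0,1]:
   by Cauchy's mean value theorem its chord slopes are values of g_rho'/h' on (0,1/2), and this
   ratio decreases, which after the substitution u = ln((1-e)/e) reduces to an elementary
   inequality for exponentials.  Jensen's inequality then gives F(rho) <= phi_rho(1 - C), the
   BSC value, and comparing phi_rho with its chord from phi_rho(0) = 2^-rho to phi_rho(1) = 1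
   gives F(rho) >= 1 + (2^-rho - 1) C, the BEC value. *)

text \<open>The elementary inequality behind everything: for v > 0 and x \<le> v,
  x (e^v + 1) - e^v + e^(v-x) - e^x + 1 \<ge> 0.  It vanishes at x = 0, and its derivative
  (1 - e^-x)(e^v - e^x) has the sign of x on (-\<infinity>, v].\<close>
lemma exp_key_inequality:
  fixes v x :: real
  assumes v: "v > 0" and xv: "x \<le> v"
  shows "0 \<le> x * (exp v + 1) - exp v + exp (v - x) - exp x + 1"
proof -
  define \<phi> where "\<phi> = (\<lambda>x. x * (exp v + 1) - exp v + exp (v - x) - exp x + 1)"
  define \<phi>' where "\<phi>' = (\<lambda>x. (exp v + 1) - exp (v - x) - exp x)"
  have der: "(\<phi> has_real_derivative \<phi>' z) (at z)" for z
    unfolding \<phi>_def \<phi>'_def by (auto intro!: derivative_eq_intros)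
  have factored: "\<phi>' z = (1 - exp (- z)) * (exp v - exp z)" for z
    unfolding \<phi>'_def by (simp add: algebra_simps exp_diff exp_minus field_simps)
  have cont: "continuous_on S \<phi>" for S
    unfolding \<phi>_def by (intro continuous_intros)
  have "\<phi> 0 = 0" unfolding \<phi>_def by simp
  show ?thesis
  proof (cases "x \<ge> 0")
    case True
    have "\<phi> 0 \<le> \<phi> x"
    proof (rule DERIV_nonneg_imp_increasing_open[OF True _ cont])
      fix z assume z: "0 < z" "z < x"
      have "\<phi>' z \<ge> 0" unfolding factored using z xv
        by (intro mult_nonneg_nonneg) auto
      then show "\<exists>y. (\<phi> has_real_derivative y) (at z) \<and> 0 \<le> y" using der by blast
    qed
    then show ?thesis using \<open>\<phi> 0 = 0\<close> unfolding \<phi>_def by simp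
  next
    case False
    have "\<phi> x \<ge> \<phi> 0"
    proof (rule DERIV_nonpos_imp_decreasing_open[of x 0, OF _ _ cont])
      show "x \<le> 0" using False by simp
      fix z assume z: "x < z" "z < 0"
      have "1 - exp (-z) \<le> 0" using z by simp
      moreover have "exp v - exp z \<ge> 0" using z v by simp
      ultimately have "\<phi>' z \<le> 0" unfolding factored by (simp add: mult_nonpos_nonneg)
      then show "\<exists>y. (\<phi> has_real_derivative y) (at z) \<and> y \<le> 0" using der by blast
    qed
    then show ?thesis using \<open>\<phi> 0 = 0\<close> unfolding \<phi>_def by simp
  qed
qed

text \<open>The ratio of derivatives g_rho'/h' (up to a positive constant), written in terms of the
  log-likelihood ratio u = ln((1-e)/e) of the crossover e, with s = 1/(1+rho).\<close>
definition llr_slope :: "real \<Rightarrow> real \<Rightarrow> real \<Rightarrow> real" where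
  "llr_slope s \<rho> u = (1 + exp (- s * u)) powr \<rho> * (exp ((1 - s) * u) - 1) / u"

text \<open>The slope kernel increases in u > 0: its derivative is a positive multiple of the
  left-hand side of exp_key_inequality at v = u, x = (1-s) u, rescaled by e^(-su).\<close>
lemma llr_slope_mono:
  assumes s: "s > 0" and rs: "\<rho> * s = 1 - s" and u1: "0 < u1" and u12: "u1 \<le> u2"
  shows "llr_slope s \<rho> u1 \<le> llr_slope s \<rho> u2"
proof -
  define P where "P = (\<lambda>u. (1 + exp (- s * u)) powr \<rho>)"
  define P' where "P' = (\<lambda>u::real. \<rho> * (1 + exp (- s * u)) powr (\<rho> - 1) * (- s * exp (- s * u)))"
  define Q where "Q = (\<lambda>u. (exp ((1 - s) * u) - 1) / u)"
  define Q' where "Q' = (\<lambda>u. ((1 - s) * exp ((1 - s) * u) * u - (exp ((1 - s) * u) - 1)) / u^2)"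
  have dP: "(P has_real_derivative P' u) (at u)" for u
    unfolding P_def P'_def
    by (auto intro!: derivative_eq_intros simp: powr_diff add_pos_pos)
  have dQ: "(Q has_real_derivative Q' u) (at u)" if "u \<noteq> 0" for u
    unfolding Q_def Q'_def using that
    by (auto intro!: derivative_eq_intros simp: power2_eq_square field_simps)
  have slope_PQ: "llr_slope s \<rho> u = P u * Q u" for u unfolding llr_slope_def P_def Q_def by simp
  have deriv_nonneg: "P' u * Q u + P u * Q' u \<ge> 0" if u: "u > 0" for u
  proof -
    define E1 where "E1 = exp (- s * u)"
    define E2 where "E2 = exp ((1 - s) * u)"
    have E1p: "E1 > 0" unfolding E1_def by simp
    have exp_u: "exp u = E2 / E1" unfolding E1_def E2_def by (simp add: exp_diff[symmetric] algebra_simps)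
    have exp_su: "exp (u - (1 - s) * u) = 1 / E1" unfolding E1_def by (simp add: exp_minus algebra_simps divide_inverse)
    have key: "0 \<le> (1 - s) * u * (E2 / E1 + 1) - E2 / E1 + 1 / E1 - E2 + 1"
      using exp_key_inequality[of u "(1 - s) * u"] u s exp_u exp_su unfolding E2_def[symmetric]
      by (simp add: mult_le_cancel_right2)
    have key_scaled: "0 \<le> (1 - s) * u * (E2 + E1) - E2 + 1 - E1 * E2 + E1"
    proof -
      have "0 \<le> E1 * ((1 - s) * u * (E2 / E1 + 1) - E2 / E1 + 1 / E1 - E2 + 1)"
        using key E1p by simp
      also have "\<dots> = (1 - s) * u * (E2 + E1) - E2 + 1 - E1 * E2 + E1"
        using E1p by (simp add: field_simps)
      finally show ?thesis .
    qed
    have P_eq: "P u = (1 + E1) powr (\<rho> - 1) * (1 + E1)"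
      unfolding P_def E1_def by (simp add: powr_diff add_pos_pos)
    have P'_eq: "P' u = - (1 - s) * (1 + E1) powr (\<rho> - 1) * E1"
    proof -
      have "P' u = - (\<rho> * s) * (1 + E1) powr (\<rho> - 1) * E1"
        unfolding P'_def E1_def by (simp add: algebra_simps)
      then show ?thesis using rs by simp
    qed
    have "P' u * Q u + P u * Q' u
        = (1 + E1) powr (\<rho> - 1) / u^2 * ((1 - s) * u * (E2 + E1) - E2 + 1 - E1 * E2 + E1)"
      unfolding P_eq P'_eq Q_def Q'_def E1_def[symmetric] E2_def[symmetric]
      using u by (simp add: field_simps power2_eq_square)
    also have "\<dots> \<ge> 0" using key_scaled by (intro mult_nonneg_nonneg) auto
    finally show ?thesis .
  qed
  have "P u1 * Q u1 \<le> P u2 * Q u2"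
  proof (rule DERIV_nonneg_imp_increasing_open[OF u12])
    fix z assume z: "u1 < z" "z < u2"
    then have "z > 0" using u1 by simp
    show "\<exists>y. ((\<lambda>u. P u * Q u) has_real_derivative y) (at z) \<and> 0 \<le> y"
      using DERIV_mult[OF dP dQ[of z]] deriv_nonneg[OF \<open>z > 0\<close>] \<open>z > 0\<close> by (auto simp: mult.commute)
  next
    show "continuous_on {u1..u2} (\<lambda>u. P u * Q u)"
      unfolding P_def Q_def using u1
      by (intro continuous_intros) (auto, smt (verit) exp_gt_zero)
  qed
  then show ?thesis by (simp add: slope_PQ)
qed

text \<open>The convention 0 log 0 = 0 needs no case split: the product formula already gives 0 at 0.\<close>
lemma plogp_eq: "plogp t = t * log 2 t"
  by (simp add: plogp_def)

lemma plogp_continuous: "continuous_on {0..1} plogp"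
  unfolding continuous_on_def
proof
  fix x :: real assume x: "x \<in> {0..1}"
  show "(plogp \<longlongrightarrow> plogp x) (at x within {0..1})"
  proof (cases "x = 0")
    case True
    have "((\<lambda>t::real. t * log 2 t) \<longlongrightarrow> 0) (at_right 0)"
      unfolding log_def by real_asymp
    then show ?thesis using True by (simp add: at_within_Icc_at_right plogp_eq[abs_def])
  next
    case False
    then have "isCont (\<lambda>t. t * log 2 t) x"
      using x by (intro continuous_intros) auto
    then have "isCont plogp x" by (simp add: plogp_eq[abs_def])
    then show ?thesis using isCont_def tendsto_within_subset by (metis subset_UNIV)
  qed
qed

lemma bin_entropy_continuous: "continuous_on {0..1} bin_entropy"
proof -
  have "continuous_on {0..1} (\<lambda>e::real. plogp (1 - e))"
    by (rule continuous_on_compose2[OF plogp_continuous]) (auto intro!: continuous_intros)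
  then show ?thesis unfolding bin_entropy_def[abs_def]
    by (intro continuous_intros plogp_continuous)
qed

lemma bin_entropy_deriv:
  assumes "0 < e" "e < 1"
  shows "(bin_entropy has_real_derivative ln ((1 - e) / e) / ln 2) (at e)"
proof -
  have "((\<lambda>e. - (e * (ln e / ln 2)) - (1 - e) * (ln (1 - e) / ln 2)) has_real_derivative
      ln ((1 - e) / e) / ln 2) (at e)"
    using assms by (auto intro!: derivative_eq_intros simp: ln_div divide_simps)
  moreover have "bin_entropy = (\<lambda>e. - (e * (ln e / ln 2)) - (1 - e) * (ln (1 - e) / ln 2))"
    by (simp add: fun_eq_iff bin_entropy_def plogp_def log_def)
  ultimately show ?thesis by simp
qed

lemma bin_entropy_sym: "bin_entropy (1 - e) = bin_entropy e"
  by (simp add: bin_entropy_def)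

lemma bin_entropy_0: "bin_entropy 0 = 0"
  by (simp add: bin_entropy_def plogp_def)

lemma bin_entropy_half: "bin_entropy (1/2) = 1"
  by (simp add: bin_entropy_def plogp_def log_divide)

lemma bin_entropy_strict_mono:
  assumes "0 \<le> a" "a < b" "b \<le> 1/2"
  shows "bin_entropy a < bin_entropy b"
proof (rule DERIV_pos_imp_increasing_open[OF assms(2)])
  fix x assume x: "a < x" "x < b"
  have "ln ((1 - x) / x) / ln 2 > 0" using x assms by (simp add: field_simps)
  then show "\<exists>y. (bin_entropy has_real_derivative y) (at x) \<and> 0 < y"
    using bin_entropy_deriv[of x] x assms by auto
next
  show "continuous_on {a..b} bin_entropy"
    by (rule continuous_on_subset[OF bin_entropy_continuous]) (use assms in auto)
qed

lemma bin_entropy_mono: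
  assumes "0 \<le> a" "a \<le> b" "b \<le> 1/2"
  shows "bin_entropy a \<le> bin_entropy b"
  using bin_entropy_strict_mono[of a b] assms by (cases "a = b") auto

lemma bin_entropy_range:
  assumes "0 \<le> e" "e \<le> 1"
  shows "bin_entropy e \<in> {0..1}"
proof (cases "e \<le> 1/2")
  case True
  then show ?thesis using bin_entropy_mono[of 0 e] bin_entropy_mono[of e "1/2"] assms
      bin_entropy_0 bin_entropy_half by auto
next
  case False
  then show ?thesis using bin_entropy_mono[of 0 "1-e"] bin_entropy_mono[of "1-e" "1/2"] assms
      bin_entropy_0 bin_entropy_half bin_entropy_sym[of e] by auto
qed

text \<open>h restricted to [0,1/2] is a bijection onto [0,1], so the definite description in
  bin_entropy_inv picks the unique preimage.\<close>
lemma bin_entropy_inv: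
  assumes "0 \<le> t" "t \<le> 1"
  shows "bin_entropy_inv t \<in> {0..1/2}" and "bin_entropy (bin_entropy_inv t) = t"
proof -
  obtain e where e: "e \<in> {0..1/2}" "bin_entropy e = t"
    using IVT'[of bin_entropy 0 t "1/2"] assms bin_entropy_0 bin_entropy_half
      continuous_on_subset[OF bin_entropy_continuous] by fastforce
  have "e' = e" if "e' \<in> {0..1/2}" "bin_entropy e' = t" for e'
    using bin_entropy_strict_mono[of e e'] bin_entropy_strict_mono[of e' e] that e
    by (cases e e' rule: linorder_cases) auto
  with e have "\<exists>!e. e \<in> {0..1/2} \<and> bin_entropy e = t" by blast
  then have "bin_entropy_inv t \<in> {0..1/2} \<and> bin_entropy (bin_entropy_inv t) = t"
    unfolding bin_entropy_inv_def by (rule theI')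
  then show "bin_entropy_inv t \<in> {0..1/2}" "bin_entropy (bin_entropy_inv t) = t" by auto
qed

lemma bin_entropy_inv_eq:
  assumes "0 \<le> e" "e \<le> 1/2"
  shows "bin_entropy_inv (bin_entropy e) = e"
proof -
  let ?e' = "bin_entropy_inv (bin_entropy e)"
  have "bin_entropy e \<in> {0..1}" using bin_entropy_range assms by auto
  then have "?e' \<in> {0..1/2}" "bin_entropy ?e' = bin_entropy e" using bin_entropy_inv by auto
  then show ?thesis using bin_entropy_strict_mono[of e ?e'] bin_entropy_strict_mono[of ?e' e] assms
    by (cases e ?e' rule: linorder_cases) auto
qed

lemma bin_entropy_inv_strict_mono:
  assumes "0 \<le> t1" "t1 < t2" "t2 \<le> 1"
  shows "bin_entropy_inv t1 < bin_entropy_inv t2"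
proof (rule ccontr)
  assume "\<not> ?thesis"
  then have "bin_entropy (bin_entropy_inv t2) \<le> bin_entropy (bin_entropy_inv t1)"
    using bin_entropy_inv[of t1] bin_entropy_inv[of t2] assms by (intro bin_entropy_mono) auto
  then show False using bin_entropy_inv[of t1] bin_entropy_inv[of t2] assms by auto
qed

text \<open>g_rho(e): the function F(rho) of a binary symmetric channel with crossover e.  The BSC
  bound of the theorem is g_rho(h^-1(1 - C)).\<close>
definition bsc_F :: "real \<Rightarrow> real \<Rightarrow> real" where
  "bsc_F \<rho> e = 2 powr (-\<rho>) * (e powr (1/(1+\<rho>)) + (1 - e) powr (1/(1+\<rho>))) powr (1+\<rho>)"

lemma bsc_F_sym: "bsc_F \<rho> (1 - e) = bsc_F \<rho> e"
  by (simp add: bsc_F_def add.commute)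

lemma powr_sum_pos:
  fixes e s :: real
  assumes "0 \<le> e" "e \<le> 1" "s > 0"
  shows "e powr s + (1 - e) powr s > 0"
  using assms by (cases "e = 0") (auto intro: add_pos_nonneg)

lemma bsc_F_continuous:
  assumes "\<rho> > -1"
  shows "continuous_on {0..1} (bsc_F \<rho>)"
proof -
  have s: "1/(1+\<rho>) > 0" using assms by simp
  have base: "continuous_on {0..1} (\<lambda>e::real. e powr (1/(1+\<rho>)) + (1 - e) powr (1/(1+\<rho>)))"
    using s by (intro continuous_intros continuous_on_powr') auto
  show ?thesis unfolding bsc_F_def[abs_def]
    using powr_sum_pos[OF _ _ s] by (intro continuous_intros base) (auto simp: less_le)
qed

lemma bsc_F_deriv:
  assumes r: "\<rho> > -1" and e: "0 < e" "e < 1"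
  defines "s \<equiv> 1/(1+\<rho>)"
  shows "(bsc_F \<rho> has_real_derivative
     2 powr (-\<rho>) * (e powr s + (1 - e) powr s) powr \<rho> * (e powr (s - 1) - (1 - e) powr (s - 1))) (at e)"
proof -
  have s: "s * (1 + \<rho>) = 1" using r by (simp add: s_def)
  define A where "A = e powr s + (1 - e) powr s"
  have "A > 0" unfolding A_def using powr_sum_pos[of e s] e r by (auto simp: s_def)
  have dA: "((\<lambda>e. e powr s + (1 - e) powr s) has_real_derivative
      s * e powr (s - 1) - s * (1 - e) powr (s - 1)) (at e)"
    using e by (auto intro!: derivative_eq_intros simp: powr_diff)
  have "(bsc_F \<rho> has_real_derivative
     2 powr (-\<rho>) * A powr \<rho> * ((1+\<rho>) * (s * e powr (s - 1) - s * (1 - e) powr (s - 1)))) (at e)"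
    unfolding bsc_F_def[abs_def] s_def[symmetric] A_def
    using DERIV_cmult[OF DERIV_fun_powr[OF dA, of "1+\<rho>"], of "2 powr (-\<rho>)"] \<open>A > 0\<close>[unfolded A_def]
    by (simp add: mult_ac)
  moreover have factor: "(1+\<rho>) * (s * e powr (s - 1) - s * (1 - e) powr (s - 1))
      = e powr (s - 1) - (1 - e) powr (s - 1)"
  proof -
    have "(1+\<rho>) * (s * e powr (s - 1) - s * (1 - e) powr (s - 1))
        = (s * (1 + \<rho>)) * (e powr (s - 1) - (1 - e) powr (s - 1))"
      by (simp add: algebra_simps)
    then show ?thesis using s by simp
  qed
  ultimately show ?thesis unfolding A_def by simp
qed

text \<open>Cauchy's mean value theorem for functions continuous on a closed interval (the library
  version asks for continuity on a neighbourhood of the endpoints, which h lacks at 0).\<close>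
lemma cauchy_mvt:
  fixes f g :: "real \<Rightarrow> real"
  assumes ab: "a < b" and cf: "continuous_on {a..b} f" and cg: "continuous_on {a..b} g"
    and df: "\<And>z. a < z \<Longrightarrow> z < b \<Longrightarrow> (f has_real_derivative f' z) (at z)"
    and dg: "\<And>z. a < z \<Longrightarrow> z < b \<Longrightarrow> (g has_real_derivative g' z) (at z)"
  shows "\<exists>c. a < c \<and> c < b \<and> (f b - f a) * g' c = (g b - g a) * f' c"
proof -
  define k where "k = (\<lambda>x. (f b - f a) * g x - (g b - g a) * f x)"
  have "k a = k b" by (simp add: k_def algebra_simps)
  moreover have "continuous_on {a..b} k" unfolding k_def by (intro continuous_intros cf cg)
  moreover have dk: "(k has_real_derivative (f b - f a) * g' z - (g b - g a) * f' z) (at z)"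
    if "a < z" "z < b" for z
    unfolding k_def by (intro DERIV_diff DERIV_cmult df dg that)
  ultimately obtain z where z: "a < z" "z < b" "(k has_real_derivative 0) (at z)"
    using Rolle[OF ab] real_differentiable_def by blast
  then have "(f b - f a) * g' z - (g b - g a) * f' z = 0" using dk[OF z(1,2)] DERIV_unique by blast
  then show ?thesis using z by auto
qed

text \<open>The ratio g_rho'(e)/h'(e), divided by the positive constant 2^-rho ln 2, as a function
  of the crossover e (with s = 1/(1+rho)).\<close>
definition bsc_slope :: "real \<Rightarrow> real \<Rightarrow> real \<Rightarrow> real" where
  "bsc_slope s \<rho> e = (e powr s + (1 - e) powr s) powr \<rho> * (e powr (s - 1) - (1 - e) powr (s - 1))
     / ln ((1 - e) / e)"

lemma bsc_slope_llr:
  assumes rs: "\<rho> * s = 1 - s" and e: "0 < e" "e < 1"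
  shows "bsc_slope s \<rho> e = llr_slope s \<rho> (ln ((1 - e) / e))"
proof -
  define u where "u = ln ((1 - e) / e)"
  define L where "L = ln e"
  have ln_1e: "ln (1 - e) = L + u" unfolding u_def L_def using e by (simp add: ln_div)
  have pe: "e powr c = exp (c * L)" for c unfolding L_def using e by (simp add: powr_def)
  have p1e: "(1 - e) powr c = exp (c * (L + u))" for c using e ln_1e by (simp add: powr_def)
  have A: "e powr s + (1 - e) powr s = exp (s * L + s * u) * (1 + exp (- s * u))"
    unfolding pe p1e by (simp add: algebra_simps exp_add[symmetric])
  have "(e powr s + (1 - e) powr s) powr \<rho> = exp (s * L + s * u) powr \<rho> * (1 + exp (- s * u)) powr \<rho>"
    unfolding A by (rule powr_mult)
  also have "exp (s * L + s * u) powr \<rho> = exp ((1 - s) * L + (1 - s) * u)"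
    using rs by (simp add: powr_def algebra_simps flip: rs)
  finally have Ap: "(e powr s + (1 - e) powr s) powr \<rho> = exp ((1 - s) * L + (1 - s) * u) * (1 + exp (- s * u)) powr \<rho>" .
  have N: "e powr (s - 1) - (1 - e) powr (s - 1) = exp ((s - 1) * L) * (1 - exp ((s - 1) * u))"
    unfolding pe p1e by (simp add: algebra_simps exp_add[symmetric])
  have "bsc_slope s \<rho> e = (exp ((1 - s) * L + (1 - s) * u) * exp ((s - 1) * L) * (1 - exp ((s - 1) * u)))
      * (1 + exp (- s * u)) powr \<rho> / u"
    unfolding bsc_slope_def Ap N u_def[symmetric] by (simp add: algebra_simps)
  also have "exp ((1 - s) * L + (1 - s) * u) * exp ((s - 1) * L) * (1 - exp ((s - 1) * u)) = exp ((1 - s) * u) - 1"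
    by (simp add: algebra_simps exp_add[symmetric])
  finally show ?thesis unfolding llr_slope_def u_def by (simp add: algebra_simps)
qed

text \<open>The ratio g_rho'/h' decreases on (0,1/2): the log-likelihood ratio decreases in e.\<close>
lemma bsc_slope_antimono:
  assumes r: "\<rho> > -1" and e: "0 < e1" "e1 \<le> e2" "e2 < 1/2"
  shows "bsc_slope (1/(1+\<rho>)) \<rho> e2 \<le> bsc_slope (1/(1+\<rho>)) \<rho> e1"
proof -
  define s where "s = 1/(1+\<rho>)"
  have s: "s > 0" "\<rho> * s = 1 - s" using r by (auto simp: s_def field_simps)
  have q: "1 < (1 - e2) / e2" "(1 - e2) / e2 \<le> (1 - e1) / e1" using e by (auto simp: field_simps)
  have "llr_slope s \<rho> (ln ((1 - e2) / e2)) \<le> llr_slope s \<rho> (ln ((1 - e1) / e1))"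
    by (rule llr_slope_mono[OF s]) (use q in auto)
  then show ?thesis using bsc_slope_llr[OF s(2), of e1] bsc_slope_llr[OF s(2), of e2] e
    unfolding s_def by simp
qed

lemma bsc_F_chord_slope:
  assumes r: "\<rho> > -1" and e: "0 \<le> e1" "e1 < e2" "e2 \<le> 1/2"
  shows "\<exists>z. e1 < z \<and> z < e2 \<and> bsc_F \<rho> e2 - bsc_F \<rho> e1
             = (bin_entropy e2 - bin_entropy e1) * (2 powr (-\<rho>) * ln 2 * bsc_slope (1/(1+\<rho>)) \<rho> z)"
proof -
  obtain z where z: "e1 < z" "z < e2" and eq:
    "(bsc_F \<rho> e2 - bsc_F \<rho> e1) * (ln ((1 - z) / z) / ln 2) = (bin_entropy e2 - bin_entropy e1) *
     (2 powr (-\<rho>) * (z powr (1/(1+\<rho>)) + (1 - z) powr (1/(1+\<rho>))) powr \<rho>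
       * (z powr (1/(1+\<rho>) - 1) - (1 - z) powr (1/(1+\<rho>) - 1)))"
    using cauchy_mvt[OF e(2) continuous_on_subset[OF bsc_F_continuous[OF r]]
        continuous_on_subset[OF bin_entropy_continuous] bsc_F_deriv[OF r] bin_entropy_deriv] e
    by fastforce
  have "ln ((1 - z) / z) > 0" using z e by (simp add: field_simps)
  with eq have "bsc_F \<rho> e2 - bsc_F \<rho> e1
      = (bin_entropy e2 - bin_entropy e1) * (2 powr (-\<rho>) * ln 2 * bsc_slope (1/(1+\<rho>)) \<rho> z)"
    unfolding bsc_slope_def by (simp add: field_simps)
  then show ?thesis using z by blast
qed

lemma bsc_F_slopes_decrease:
  assumes r: "\<rho> > -1" and e: "0 \<le> e1" "e1 < e2" "e2 < e3" "e3 \<le> 1/2"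
  shows "(bsc_F \<rho> e3 - bsc_F \<rho> e2) / (bin_entropy e3 - bin_entropy e2)
       \<le> (bsc_F \<rho> e2 - bsc_F \<rho> e1) / (bin_entropy e2 - bin_entropy e1)"
proof -
  let ?c = "2 powr (-\<rho>) * ln 2"
  obtain z1 where z1: "e1 < z1" "z1 < e2" and q1:
    "bsc_F \<rho> e2 - bsc_F \<rho> e1 = (bin_entropy e2 - bin_entropy e1) * (?c * bsc_slope (1/(1+\<rho>)) \<rho> z1)"
    using bsc_F_chord_slope[OF r, of e1 e2] e by auto
  obtain z2 where z2: "e2 < z2" "z2 < e3" and q2:
    "bsc_F \<rho> e3 - bsc_F \<rho> e2 = (bin_entropy e3 - bin_entropy e2) * (?c * bsc_slope (1/(1+\<rho>)) \<rho> z2)"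
    using bsc_F_chord_slope[OF r, of e2 e3] e by auto
  have h12: "bin_entropy e2 - bin_entropy e1 > 0" using bin_entropy_strict_mono[of e1 e2] e by simp
  have h23: "bin_entropy e3 - bin_entropy e2 > 0" using bin_entropy_strict_mono[of e2 e3] e by simp
  have "bsc_slope (1/(1+\<rho>)) \<rho> z2 \<le> bsc_slope (1/(1+\<rho>)) \<rho> z1"
    by (rule bsc_slope_antimono[OF r]) (use z1 z2 e in auto)
  then have "?c * bsc_slope (1/(1+\<rho>)) \<rho> z2 \<le> ?c * bsc_slope (1/(1+\<rho>)) \<rho> z1"
    by (intro mult_left_mono) auto
  then show ?thesis using h12 h23 unfolding q1 q2 by simp
qed

lemma concave_on_decreasing_slopes:
  fixes f :: "real \<Rightarrow> real"
  assumes slopes: "\<And>x y z. a \<le> x \<Longrightarrow> x < y \<Longrightarrow> y < z \<Longrightarrow> z \<le> b \<Longrightarrow>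
      (f z - f y) / (z - y) \<le> (f y - f x) / (y - x)"
  shows "concave_on {a..b} f"
proof (rule concave_on_linorderI)
  fix t x y :: real
  assume a: "0 < t" "t < 1" "x \<in> {a..b}" "y \<in> {a..b}" "x < y"
  define m where "m = (1 - t) * x + t * y"
  have "(1 - t) * x < (1 - t) * y" "t * x < t * y" using a by (auto intro: mult_strict_left_mono)
  then have m: "x < m" "m < y" unfolding m_def by (auto simp: algebra_simps)
  have dist: "y - m = (1 - t) * (y - x)" "m - x = t * (y - x)" unfolding m_def by algebra+
  have pos: "0 < (1 - t) * (y - x)" "0 < t * (y - x)" using a by auto
  have "(f y - f m) / ((1 - t) * (y - x)) \<le> (f m - f x) / (t * (y - x))"
    using slopes[of x m y] a m unfolding dist by auto
  then have "(f y - f m) * (t * (y - x)) \<le> (f m - f x) * ((1 - t) * (y - x))"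
    using pos by (simp add: field_simps)
  then have "(t * (f y - f m)) * (y - x) \<le> ((1 - t) * (f m - f x)) * (y - x)"
    by (simp add: algebra_simps)
  then have "t * (f y - f m) \<le> (1 - t) * (f m - f x)"
    using a by (simp add: mult_le_cancel_right)
  then show "(1 - t) * f x + t * f y \<le> f ((1 - t) *\<^sub>R x + t *\<^sub>R y)"
    by (simp add: m_def algebra_simps)
qed simp

definition bsc_F_entropy :: "real \<Rightarrow> real \<Rightarrow> real" where
  "bsc_F_entropy \<rho> t = bsc_F \<rho> (bin_entropy_inv t)"

lemma bsc_F_entropy_concave:
  assumes r: "\<rho> > -1"
  shows "concave_on {0..1} (bsc_F_entropy \<rho>)"
proof (rule concave_on_decreasing_slopes)
  fix t1 t2 t3 :: real
  assume t: "0 \<le> t1" "t1 < t2" "t2 < t3" "t3 \<le> 1"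
  define e1 e2 e3 where "e1 = bin_entropy_inv t1" "e2 = bin_entropy_inv t2" "e3 = bin_entropy_inv t3"
  have e: "0 \<le> e1" "e1 < e2" "e2 < e3" "e3 \<le> 1/2"
    using bin_entropy_inv_strict_mono[of t1 t2] bin_entropy_inv_strict_mono[of t2 t3]
      bin_entropy_inv(1)[of t1] bin_entropy_inv(1)[of t3] t
    unfolding e1_e2_e3_def by auto
  have "bin_entropy e1 = t1" "bin_entropy e2 = t2" "bin_entropy e3 = t3"
    using bin_entropy_inv(2)[of t1] bin_entropy_inv(2)[of t2] bin_entropy_inv(2)[of t3] t
    unfolding e1_e2_e3_def by auto
  then show "(bsc_F_entropy \<rho> t3 - bsc_F_entropy \<rho> t2) / (t3 - t2)
      \<le> (bsc_F_entropy \<rho> t2 - bsc_F_entropy \<rho> t1) / (t2 - t1)"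
    using bsc_F_slopes_decrease[OF r e] by (simp add: bsc_F_entropy_def e1_e2_e3_def)
qed

lemma bsc_F_entropy_bin_entropy:
  assumes "0 \<le> e" "e \<le> 1"
  shows "bsc_F_entropy \<rho> (bin_entropy e) = bsc_F \<rho> e"
proof (cases "e \<le> 1/2")
  case True
  then show ?thesis using bin_entropy_inv_eq[of e] assms by (simp add: bsc_F_entropy_def)
next
  case False
  then have "bsc_F_entropy \<rho> (bin_entropy (1 - e)) = bsc_F \<rho> (1 - e)"
    using bin_entropy_inv_eq[of "1 - e"] assms by (simp add: bsc_F_entropy_def)
  then show ?thesis by (simp add: bin_entropy_sym bsc_F_sym)
qed

lemma bsc_F_entropy_0:
  assumes "\<rho> > -1"
  shows "bsc_F_entropy \<rho> 0 = 2 powr (-\<rho>)"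
  using bsc_F_entropy_bin_entropy[of 0 \<rho>] assms by (simp add: bin_entropy_0 bsc_F_def)

lemma bsc_F_entropy_1:
  assumes r: "\<rho> > -1"
  shows "bsc_F_entropy \<rho> 1 = 1"
proof -
  define s where "s = 1/(1+\<rho>)"
  have s: "s * (1 + \<rho>) = 1" using r by (simp add: s_def)
  have "bsc_F_entropy \<rho> 1 = 2 powr (-\<rho>) * (2 * (1/2) powr s) powr (1 + \<rho>)"
    using bsc_F_entropy_bin_entropy[of "1/2" \<rho>] by (simp add: bin_entropy_half bsc_F_def s_def)
  also have "(2 * (1/2::real) powr s) powr (1 + \<rho>) = 2 powr (1 + \<rho>) * (1/2) powr (s * (1 + \<rho>))"
    by (simp add: powr_mult powr_powr)
  also have "\<dots> = 2 powr \<rho>" unfolding s by (simp add: powr_add)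
  finally show ?thesis by (simp add: powr_minus)
qed

definition out_weight :: "(bool \<Rightarrow> 'y::finite \<Rightarrow> real) \<Rightarrow> 'y \<Rightarrow> real" where
  "out_weight W y = (W False y + W True y) / 2"

definition out_crossover :: "(bool \<Rightarrow> 'y::finite \<Rightarrow> real) \<Rightarrow> 'y \<Rightarrow> real" where
  "out_crossover W y = W False y / (W False y + W True y)"

lemma sum_filter_if:
  fixes f :: "'y::finite \<Rightarrow> real"
  shows "(\<Sum>y | P y. f y) = (\<Sum>y\<in>UNIV. if P y then f y else 0)"
  using sum.inter_filter[of UNIV f P] by simp

lemma sum_by_columns:
  fixes W :: "bool \<Rightarrow> 'y::finite \<Rightarrow> real" and f :: "real \<Rightarrow> real \<Rightarrow> real"
  assumes nonneg: "\<And>x y. W x y \<ge> 0"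
    and column: "\<And>p q. 0 \<le> p \<Longrightarrow> 0 \<le> q \<Longrightarrow> 0 < p + q \<Longrightarrow>
      (if 0 < p then f p q else 0) + (if 0 < q then f q p else 0) = (p + q) * G (p / (p + q))"
  shows "(\<Sum>x\<in>UNIV. 1/2 * (\<Sum>y | W x y > 0. f (W x y) (W (\<not> x) y)))
       = (\<Sum>y | out_weight W y > 0. out_weight W y * G (out_crossover W y))"
proof -
  let ?T = "\<lambda>x y. if W x y > 0 then f (W x y) (W (\<not> x) y) else 0"
  have "(\<Sum>x\<in>UNIV. 1/2 * (\<Sum>y | W x y > 0. f (W x y) (W (\<not> x) y)))
      = (\<Sum>x\<in>UNIV. \<Sum>y\<in>UNIV. 1/2 * ?T x y)"
    by (simp add: sum_filter_if sum_distrib_left)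
  also have "\<dots> = (\<Sum>y\<in>UNIV. 1/2 * (?T False y + ?T True y))"
    by (subst sum.swap) (simp add: UNIV_bool algebra_simps)
  also have "\<dots> = (\<Sum>y\<in>UNIV. if out_weight W y > 0 then out_weight W y * G (out_crossover W y) else 0)"
  proof (rule sum.cong[OF refl])
    fix y
    show "1/2 * (?T False y + ?T True y)
        = (if out_weight W y > 0 then out_weight W y * G (out_crossover W y) else 0)"
    proof (cases "out_weight W y > 0")
      case True
      then have "0 < W False y + W True y" by (simp add: out_weight_def)
      from column[OF nonneg nonneg this]
      have "?T False y + ?T True y = (W False y + W True y) * G (out_crossover W y)"
        unfolding out_crossover_def by (simp only: not_False_eq_True not_True_eq_False)
      then show ?thesis using True by (simp add: out_weight_def)
    next
      case False
      then have "W False y = 0" "W True y = 0"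
        using nonneg[of False y] nonneg[of True y] by (auto simp: out_weight_def)
      then show ?thesis using False by simp
    qed
  qed
  also have "\<dots> = (\<Sum>y | out_weight W y > 0. out_weight W y * G (out_crossover W y))"
    by (simp add: sum_filter_if)
  finally show ?thesis .
qed

lemma column_gallager_F:
  fixes p q \<rho> :: real
  assumes p: "p \<ge> 0" and q: "q \<ge> 0" and pq: "p + q > 0" and r: "\<rho> > -1"
  defines "f \<equiv> \<lambda>p q. p * ((1/2 * (p powr (1/(1+\<rho>)) + q powr (1/(1+\<rho>)))) / p powr (1/(1+\<rho>))) powr \<rho>"
  shows "(if 0 < p then f p q else 0) + (if 0 < q then f q p else 0) = (p + q) * bsc_F \<rho> (p / (p + q))"
proof -
  define s where "s = 1/(1+\<rho>)"
  have s: "s > 0" "s * (1 + \<rho>) = 1" "s * \<rho> = 1 - s" using r by (auto simp: s_def field_simps)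
  define B where "B = p powr s + q powr s"
  define m where "m = p + q"
  define A where "A = (p/m) powr s + (1 - p/m) powr s"
  have B: "B > 0" unfolding B_def using p q pq s by (cases "p > 0") (auto intro: add_pos_nonneg)
  have single: "(if 0 < x then f x z else 0) = 2 powr (-\<rho>) * x powr s * B powr \<rho>"
    if x: "x \<ge> 0" and xz: "x powr s + z powr s = B" for x z
  proof (cases "x > 0")
    case True
    have "((1/2 * B) / x powr s) powr \<rho> = 2 powr (-\<rho>) * B powr \<rho> / x powr (s * \<rho>)"
      using True B by (simp add: powr_divide powr_mult powr_powr powr_minus_divide)
    then have "x * ((1/2 * B) / x powr s) powr \<rho> = 2 powr (-\<rho>) * B powr \<rho> * (x / x powr (1 - s))"
      unfolding s by simp
    also have "x / x powr (1 - s) = x powr s" using True by (simp add: powr_diff)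
    finally have "x * ((1/2 * B) / x powr s) powr \<rho> = 2 powr (-\<rho>) * B powr \<rho> * x powr s" .
    moreover have "f x z = x * ((1/2 * B) / x powr s) powr \<rho>"
      unfolding f_def s_def[symmetric] xz ..
    ultimately show ?thesis using True by (simp add: algebra_simps)
  qed (use x s in simp)
  have qm: "1 - p/m = q/m" using pq unfolding m_def by (simp add: field_simps)
  have BA: "B = m powr s * A"
    unfolding B_def A_def qm using pq p q unfolding m_def by (simp add: powr_divide algebra_simps)
  have "(if 0 < p then f p q else 0) + (if 0 < q then f q p else 0) = 2 powr (-\<rho>) * B * B powr \<rho>"
    using single[OF p, of q] single[OF q, of p] unfolding B_def
    by (simp add: algebra_simps)
  also have "\<dots> = 2 powr (-\<rho>) * B powr (1 + \<rho>)" using B by (simp add: powr_add)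
  also have "\<dots> = 2 powr (-\<rho>) * (m powr (s * (1 + \<rho>)) * A powr (1 + \<rho>))"
    unfolding BA by (simp add: powr_mult powr_powr)
  also have "\<dots> = 2 powr (-\<rho>) * (m * A powr (1 + \<rho>))" using s pq unfolding m_def by simp
  finally show ?thesis unfolding bsc_F_def s_def[symmetric] A_def m_def
    by (simp add: algebra_simps)
qed

lemma column_capacity:
  fixes p q :: real
  assumes p: "p \<ge> 0" and q: "q \<ge> 0" and pq: "p + q > 0"
  defines "f \<equiv> \<lambda>p q. p * log 2 (p / (1/2 * (p + q)))"
  shows "(if 0 < p then f p q else 0) + (if 0 < q then f q p else 0)
       = (p + q) * (1 - bin_entropy (p / (p + q)))"
proof -
  define m where "m = p + q"
  have m: "m > 0" using pq m_def by simp
  have qm: "1 - p/m = q/m" using pq unfolding m_def by (simp add: field_simps)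
  have single: "(if 0 < x then f x z else 0) = x + m * plogp (x / m)"
    if x: "x \<ge> 0" and xz: "x + z = m" for x z
  proof (cases "x > 0")
    case True
    have "log 2 (x / (1/2 * m)) = 1 + log 2 (x / m)" using True m
      by (simp add: log_divide log_mult field_simps)
    then show ?thesis using True m xz by (simp add: f_def plogp_def field_simps)
  qed (use x in \<open>simp add: plogp_def\<close>)
  have "(if 0 < p then f p q else 0) + (if 0 < q then f q p else 0)
      = (p + m * plogp (p / m)) + (q + m * plogp (q / m))"
    using single[OF p, of q] single[OF q, of p] unfolding m_def by (simp add: add.commute)
  also have "\<dots> = m * (1 - bin_entropy (p / m))"
    unfolding bin_entropy_def qm by (simp add: m_def algebra_simps)
  finally show ?thesis unfolding m_def .
qed

lemma gallager_F_columns: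
  fixes W :: "bool \<Rightarrow> 'y::finite \<Rightarrow> real"
  assumes W: "stochastic_channel W" and r: "\<rho> > -1"
  shows "gallager_F W \<rho> = (\<Sum>y | out_weight W y > 0. out_weight W y * bsc_F \<rho> (out_crossover W y))"
proof -
  have nonneg: "W x y \<ge> 0" for x y using W by (simp add: stochastic_channel_def)
  let ?f = "\<lambda>p q. p * ((1/2 * (p powr (1/(1+\<rho>)) + q powr (1/(1+\<rho>)))) / p powr (1/(1+\<rho>))) powr \<rho>"
  have "gallager_F W \<rho> = (\<Sum>x\<in>UNIV. 1/2 * (\<Sum>y | W x y > 0. ?f (W x y) (W (\<not> x) y)))"
    unfolding gallager_F_def by (simp add: UNIV_bool add.commute)
  also have "\<dots> = (\<Sum>y | out_weight W y > 0. out_weight W y * bsc_F \<rho> (out_crossover W y))"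
    by (rule sum_by_columns[OF nonneg column_gallager_F[OF _ _ _ r]])
  finally show ?thesis .
qed

lemma capacity_columns:
  fixes W :: "bool \<Rightarrow> 'y::finite \<Rightarrow> real"
  assumes W: "stochastic_channel W"
  shows "capacity W = (\<Sum>y | out_weight W y > 0. out_weight W y * (1 - bin_entropy (out_crossover W y)))"
proof -
  have nonneg: "W x y \<ge> 0" for x y using W by (simp add: stochastic_channel_def)
  let ?f = "\<lambda>p q. p * log 2 (p / (1/2 * (p + q)))"
  have "capacity W = (\<Sum>x\<in>UNIV. 1/2 * (\<Sum>y | W x y > 0. ?f (W x y) (W (\<not> x) y)))"
    unfolding capacity_def by (simp add: UNIV_bool add.commute)
  also have "\<dots> = (\<Sum>y | out_weight W y > 0. out_weight W y * (1 - bin_entropy (out_crossover W y)))"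
    by (rule sum_by_columns[OF nonneg column_capacity])
  finally show ?thesis .
qed

lemma out_weight_sum:
  fixes W :: "bool \<Rightarrow> 'y::finite \<Rightarrow> real"
  assumes W: "stochastic_channel W"
  shows "(\<Sum>y | out_weight W y > 0. out_weight W y) = 1"
proof -
  have nonneg: "out_weight W y \<ge> 0" for y
    using W by (simp add: stochastic_channel_def out_weight_def add_nonneg_nonneg)
  have "(\<Sum>y | out_weight W y > 0. out_weight W y) = (\<Sum>y\<in>UNIV. out_weight W y)"
    unfolding sum_filter_if by (rule sum.cong) (use nonneg in \<open>auto simp: less_le\<close>)
  also have "\<dots> = 1"
    using W unfolding stochastic_channel_def out_weight_def
    by (simp add: sum.distrib sum_divide_distrib[symmetric])
  finally show ?thesis .
qed

lemma concave_average_bounds: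
  fixes \<phi> :: "real \<Rightarrow> real" and w t :: "'a \<Rightarrow> real"
  assumes conc: "concave_on {0..1} \<phi>" and fin: "finite Y"
    and w: "\<And>i. i \<in> Y \<Longrightarrow> w i \<ge> 0" and w_sum: "(\<Sum>i\<in>Y. w i) = 1"
    and t: "\<And>i. i \<in> Y \<Longrightarrow> t i \<in> {0..1}"
  defines "T \<equiv> \<Sum>i\<in>Y. w i * t i"
  shows "(1 - T) * \<phi> 0 + T * \<phi> 1 \<le> (\<Sum>i\<in>Y. w i * \<phi> (t i))"
    and "(\<Sum>i\<in>Y. w i * \<phi> (t i)) \<le> \<phi> T"
proof -
  have "(\<Sum>i\<in>Y. w i * ((1 - t i) * \<phi> 0 + t i * \<phi> 1)) \<le> (\<Sum>i\<in>Y. w i * \<phi> (t i))"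
    using concave_onD[OF conc, of "t _" 0 1] t w by (intro sum_mono mult_left_mono) auto
  moreover have "(\<Sum>i\<in>Y. w i * ((1 - t i) * \<phi> 0 + t i * \<phi> 1)) = (1 - T) * \<phi> 0 + T * \<phi> 1"
    unfolding T_def using w_sum
    by (simp add: algebra_simps sum.distrib sum_subtractf flip: sum_distrib_left)
  ultimately show "(1 - T) * \<phi> 0 + T * \<phi> 1 \<le> (\<Sum>i\<in>Y. w i * \<phi> (t i))" by simp
  have "Y \<noteq> {}" using w_sum by auto
  have "- \<phi> (\<Sum>i\<in>Y. w i *\<^sub>R t i) \<le> (\<Sum>i\<in>Y. w i * - \<phi> (t i))"
    using conc unfolding concave_on_def
    by (rule convex_on_sum[OF fin \<open>Y \<noteq> {}\<close>, where f = "\<lambda>x. - \<phi> x"]) (use w w_sum t in auto)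
  then show "(\<Sum>i\<in>Y. w i * \<phi> (t i)) \<le> \<phi> T"
    unfolding T_def by (simp add: sum_negf)
qed

text \<open>Apply the previous lemma to phi_rho, over the outputs of positive
  weight, at the conditional entropies t_y = h(e_y), whose mean is 1 - C.\<close>
lemma gallager_F_bounds:
  fixes W :: "bool \<Rightarrow> 'y::finite \<Rightarrow> real"
  assumes W: "stochastic_channel W" and r: "\<rho> > -1"
  shows "F_bec (capacity W) \<rho> \<le> gallager_F W \<rho>" and "gallager_F W \<rho> \<le> F_bsc (capacity W) \<rho>"
    and "capacity W \<in> {0..1}"
proof -
  define Y where "Y = {y. out_weight W y > 0}"
  define t where "t = (\<lambda>y. bin_entropy (out_crossover W y))"
  have nonneg: "W x y \<ge> 0" for x y using W by (simp add: stochastic_channel_def)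
  have w_sum: "(\<Sum>y\<in>Y. out_weight W y) = 1" using out_weight_sum[OF W] unfolding Y_def .
  have w: "out_weight W y \<ge> 0" if "y \<in> Y" for y using nonneg by (simp add: out_weight_def)
  have crossover: "out_crossover W y \<in> {0..1}" if "y \<in> Y" for y
    using that nonneg[of False y] nonneg[of True y] by (auto simp: Y_def out_weight_def out_crossover_def)
  then have t: "t y \<in> {0..1}" if "y \<in> Y" for y using bin_entropy_range that by (simp add: t_def)
  have F: "gallager_F W \<rho> = (\<Sum>y\<in>Y. out_weight W y * bsc_F_entropy \<rho> (t y))"
    unfolding gallager_F_columns[OF W r] Y_def[symmetric] t_def
    by (rule sum.cong[OF refl]) (use bsc_F_entropy_bin_entropy crossover in auto)
  have T: "(\<Sum>y\<in>Y. out_weight W y * t y) = 1 - capacity W"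
    unfolding capacity_columns[OF W] Y_def[symmetric] using w_sum
    by (simp add: t_def algebra_simps sum_subtractf)
  note bounds = concave_average_bounds[where w = "out_weight W" and t = t,
      OF bsc_F_entropy_concave[OF r] finite w w_sum t, unfolded T]
  show "F_bec (capacity W) \<rho> \<le> gallager_F W \<rho>"
    using bounds(1) by (simp add: F bsc_F_entropy_0[OF r] bsc_F_entropy_1[OF r] F_bec_def algebra_simps)
  show "gallager_F W \<rho> \<le> F_bsc (capacity W) \<rho>"
    using bounds(2) by (simp add: F bsc_F_entropy_def bsc_F_def F_bsc_def Let_def)
  have "0 \<le> (\<Sum>y\<in>Y. out_weight W y * t y)" using t w by (intro sum_nonneg) auto
  moreover have "(\<Sum>y\<in>Y. out_weight W y * t y) \<le> (\<Sum>y\<in>Y. out_weight W y)"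
    using t w by (intro sum_mono) (auto intro: mult_left_le)
  ultimately show "capacity W \<in> {0..1}" using T w_sum by simp
qed

text \<open>Taking -log: E0 lies between its BSC and BEC values; positivity of the BEC value, a
  convex combination of 1 and 2^-rho, makes the logarithms meaningful.\<close>
lemma gallager_E0_bounds:
  fixes W :: "bool \<Rightarrow> 'y::finite \<Rightarrow> real"
  assumes W: "stochastic_channel W" and r: "\<rho> > -1"
  shows "E0_bsc (capacity W) \<rho> \<le> gallager_E0 W \<rho>" and "gallager_E0 W \<rho> \<le> E0_bec (capacity W) \<rho>"
proof -
  define C where "C = capacity W"
  have C: "0 \<le> C" "C \<le> 1" using gallager_F_bounds(3)[OF W r] unfolding C_def by auto
  have "0 < (1 - C) + 2 powr (-\<rho>) * C"
    using C by (cases "C = 0") (auto intro: add_nonneg_pos)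
  then have bec_pos: "0 < F_bec C \<rho>" by (simp add: F_bec_def algebra_simps)
  have lower: "F_bec C \<rho> \<le> gallager_F W \<rho>" and upper: "gallager_F W \<rho> \<le> F_bsc C \<rho>"
    using gallager_F_bounds[OF W r] unfolding C_def by auto
  have "0 < gallager_F W \<rho>" using bec_pos lower by linarith
  then show "E0_bsc (capacity W) \<rho> \<le> gallager_E0 W \<rho>" "gallager_E0 W \<rho> \<le> E0_bec (capacity W) \<rho>"
    using bec_pos lower upper unfolding C_def[symmetric] gallager_E0_def E0_bsc_def E0_bec_def
    by auto
qed

lemma E_sc_mono:
  assumes "\<And>\<rho>. -1 < \<rho> \<Longrightarrow> \<rho> \<le> 0 \<Longrightarrow> E0 \<rho> \<le> E0' \<rho>"
  shows "E_sc E0 R \<le> E_sc E0' R"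
  unfolding E_sc_def by (rule SUP_subset_mono[OF order_refl]) (use assms in auto)

lemma E_sp_mono:
  assumes "\<And>\<rho>. 0 < \<rho> \<Longrightarrow> E0 \<rho> \<le> E0' \<rho>"
  shows "E_sp E0 R \<le> E_sp E0' R"
  unfolding E_sp_def by (rule SUP_subset_mono[OF order_refl]) (use assms in auto)

lemma E_gfb_mono:
  assumes "\<And>\<rho>. 0 \<le> \<rho> \<Longrightarrow> E0 \<rho> \<le> E0' \<rho>"
  shows "E_gfb E0 R \<le> E_gfb E0' R"
  unfolding E_gfb_def
  by (rule SUP_subset_mono[OF order_refl]) (use assms in \<open>auto intro: divide_right_mono\<close>)

theorem mainTheorem10:
  fixes W :: "bool \<Rightarrow> 'y::finite \<Rightarrow> real" and R :: real
  assumes "BIMS W" and "R \<ge> 0"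
  defines "C \<equiv> capacity W"
  shows "(E_sc (E0_bsc C) R \<le> E_sc (gallager_E0 W) R \<and> E_sc (gallager_E0 W) R \<le> E_sc (E0_bec C) R)
       \<and> (E_sp (E0_bsc C) R \<le> E_sp (gallager_E0 W) R \<and> E_sp (gallager_E0 W) R \<le> E_sp (E0_bec C) R)
       \<and> (E_gfb (E0_bsc C) R \<le> E_gfb (gallager_E0 W) R \<and> E_gfb (gallager_E0 W) R \<le> E_gfb (E0_bec C) R)"
proof -
  have W: "stochastic_channel W" using assms(1) by (simp add: BIMS_def)
  have lower: "E0_bsc C \<rho> \<le> gallager_E0 W \<rho>" and upper: "gallager_E0 W \<rho> \<le> E0_bec C \<rho>"
    if "-1 < \<rho>" for \<rho>
    using gallager_E0_bounds[OF W that] unfolding C_def by auto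
  show ?thesis
    by (intro conjI E_sc_mono E_sp_mono E_gfb_mono lower upper) auto
qed

end
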